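(* Define the affine maps of $\mathbb{C}$ \[ L_0(t) = \tfrac{9}{10} t - \tfrac{9}{100},\quad L_1(t) = \tfrac{9}{10} t - \tfrac{9i}{100},\quad L_2(t) = \tfrac{9}{10} t + \tfrac{9}{100},\quad L_3(t) = \tfrac{9}{10} t + \tfrac{9i}{100}. \] Then for every $t \in \mathbb{D}(0,1/2)$ there exist $\tau \in \mathbb{D}(0, 0.497)$ and $j \in \{0,1,2,3\}$ such that $t = L_j(\tau)$.
   Context: $\mathbb{D}(z,r)\subset\mathbb{C}$ denotes the closed disk of center $z$ and radius $r$. *)

theory Defs
  imports "HOL-Analysis.Analysis"
begin

definition L :: "nat \<Rightarrow> complex \<Rightarrow> complex" where
  "L j t = (if j = 0 then (9/10) * t - 9/100
            else if j = 1 then (9/10) * t - 9 * \<i> / 100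
            else if j = 2 then (9/10) * t + 9/100
            else (9/10) * t + 9 * \<i> / 100)"

end

theory Submission
  imports Defs
begin

text \<open>Write \<open>L j t = 9/10 \<cdot> t + c\<^sub>j\<close> with \<open>c\<^sub>j = L j 0 = -(9/100) \<i>\<^sup>j\<close>. Then \<open>t = L j \<tau>\<close> for
  \<open>\<tau> = (t - c\<^sub>j) \<cdot> 10/9\<close>, so it suffices to find \<open>j\<close> with \<open>\<bar>t - c\<^sub>j\<bar> \<le> 0.4473 = (9/10) \<cdot> 0.497\<close>.
  Choose \<open>j\<close> so that \<open>t\<close> lies in the quarter-plane of directions within \<open>\<pi>/4\<close> of \<open>c\<^sub>j\<close>; rotating
  \<open>c\<^sub>j\<close> onto the positive real axis, this becomes an elementary estimate for a point \<open>x + \<i> y\<close>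
  with \<open>x\<^sup>2 + y\<^sup>2 \<le> 1/4\<close> and \<open>\<bar>y\<bar> \<le> x\<close>.\<close>

lemma L_affine: "L j t = 9/10 * t + L j 0"
  by (simp add: L_def)

lemma L_preimage: "L j ((t - L j 0) * (10/9)) = t"
  by (subst L_affine) (simp add: field_simps)

lemma L_zero_eq: "j \<in> {0,1,2,3} \<Longrightarrow> L j 0 = 9/100 * - (\<i> ^ j)"
  by (auto simp: L_def eval_nat_numeral)

lemma quarter_disc_shift_bound:
  fixes x y :: real
  assumes "x\<^sup>2 + y\<^sup>2 \<le> 1/4" and "\<bar>y\<bar> \<le> x"
  shows "(x - 9/100)\<^sup>2 + y\<^sup>2 \<le> (4473/10000)\<^sup>2"
  \<comment> \<open>for small \<open>x\<close> use \<open>y\<^sup>2 \<le> x\<^sup>2\<close>; for large \<open>x\<close> the term \<open>-18x/100\<close> of the expansion compensates\<close>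
proof (cases "x < 33/100")
  case True
  have "y\<^sup>2 \<le> x\<^sup>2"
    using power_mono[OF assms(2) abs_ge_zero, of 2] by simp
  moreover have "x\<^sup>2 \<le> 33/100 * x"
    using mult_right_mono[of x "33/100" x] True assms(2) by (simp add: power2_eq_square)
  ultimately show ?thesis
    using True unfolding power2_diff by (simp add: power2_eq_square)
next
  case False
  then show ?thesis
    using assms(1) unfolding power2_diff by (simp add: power2_eq_square)
qed

lemma norm_diff_rotated_le:
  fixes t u :: complex
  assumes "cmod t \<le> 1/2" and "cmod u = 1"
    and aligned: "\<bar>Im (t * cnj u)\<bar> \<le> Re (t * cnj u)"
  shows "cmod (t - 9/100 * u) \<le> 4473/10000"
proof -
  define w where "w = t * cnj u"
  have "u * cnj u = 1"
    by (subst complex_norm_square[symmetric]) (simp add: assms(2))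
  then have "t - 9/100 * u = u * (w - 9/100)"
    by (simp add: w_def algebra_simps mult.left_commute[of u])
  then have norm_eq: "cmod (t - 9/100 * u) = cmod (w - 9/100)"
    by (simp add: norm_mult assms(2))
  have "cmod w \<le> 1/2"
    using assms(1,2) by (simp add: w_def norm_mult)
  then have "(cmod w)\<^sup>2 \<le> (1/2)\<^sup>2"
    by (simp add: power_mono)
  then have "(Re w)\<^sup>2 + (Im w)\<^sup>2 \<le> 1/4"
    by (simp add: cmod_power2 power_divide)
  moreover have "\<bar>Im w\<bar> \<le> Re w"
    using aligned by (simp add: w_def)
  ultimately have "(Re w - 9/100)\<^sup>2 + (Im w)\<^sup>2 \<le> (4473/10000)\<^sup>2"
    by (rule quarter_disc_shift_bound)
  then have "(cmod (w - 9/100))\<^sup>2 \<le> (4473/10000)\<^sup>2"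
    by (simp add: cmod_power2)
  then show ?thesis
    unfolding norm_eq by (rule power2_le_imp_le) simp
qed

lemma exists_aligned_quarter_turn:
  fixes t :: complex
  shows "\<exists>j \<in> {0,1,2,3::nat}. \<bar>Im (t * cnj (- (\<i> ^ j)))\<bar> \<le> Re (t * cnj (- (\<i> ^ j)))"
proof -
  have "\<bar>Im (t * cnj (- (\<i> ^ 0)))\<bar> \<le> Re (t * cnj (- (\<i> ^ 0))) \<longleftrightarrow> \<bar>Im t\<bar> \<le> - Re t"
    and "\<bar>Im (t * cnj (- (\<i> ^ 1)))\<bar> \<le> Re (t * cnj (- (\<i> ^ 1))) \<longleftrightarrow> \<bar>Re t\<bar> \<le> - Im t"
    and "\<bar>Im (t * cnj (- (\<i> ^ 2)))\<bar> \<le> Re (t * cnj (- (\<i> ^ 2))) \<longleftrightarrow> \<bar>Im t\<bar> \<le> Re t"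
    and "\<bar>Im (t * cnj (- (\<i> ^ 3)))\<bar> \<le> Re (t * cnj (- (\<i> ^ 3))) \<longleftrightarrow> \<bar>Re t\<bar> \<le> Im t"
    by (simp_all add: eval_nat_numeral)
  moreover have "\<bar>Im t\<bar> \<le> - Re t \<or> \<bar>Re t\<bar> \<le> - Im t \<or> \<bar>Im t\<bar> \<le> Re t \<or> \<bar>Re t\<bar> \<le> Im t"
    by linarith
  ultimately show ?thesis by blast
qed

theorem mainTheorem5:
  fixes t :: complex
  assumes "t \<in> cball 0 (1/2)"
  shows "\<exists>\<tau> \<in> cball 0 (497/1000). \<exists>j \<in> {0,1,2,3::nat}. t = L j \<tau>"
proof -
  obtain j where j: "j \<in> {0,1,2,3::nat}"
    and aligned: "\<bar>Im (t * cnj (- (\<i> ^ j)))\<bar> \<le> Re (t * cnj (- (\<i> ^ j)))"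
    using exists_aligned_quarter_turn by blast
  have "cmod (t - L j 0) \<le> 4473/10000"
    unfolding L_zero_eq[OF j]
    using assms aligned by (intro norm_diff_rotated_le) (simp_all add: norm_power)
  then have "(t - L j 0) * (10/9) \<in> cball 0 (497/1000)"
    by (simp only: mem_cball_0 norm_mult) simp
  moreover have "t = L j ((t - L j 0) * (10/9))"
    by (rule L_preimage[symmetric])
  ultimately show ?thesis
    using j by blast
qed

end
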